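(* Let $H$ be a complex Hilbert space and $\{\mathcal{U}(t)\}_{t\geq 0}$ a strongly continuous semigroup on $H$ with generator $\mathcal{L}$. Let $z\in D(\mathcal{L})\cap D(\mathcal{L}^\dagger)$ with $z\neq 0$, let $\mathcal{P}:=(\cdot,z)(z,z)^{-1}z$ and $\mathcal{Q}:=1-\mathcal{P}$, and let $\{\mathcal{G}(t)\}_{t\geq0}$ denote the strongly continuous semigroup generated by $\overline{\mathcal{QL}}\mathcal{Q}$. Then the orbit map $\mathbb{R}_+\ni t\mapsto\mathcal{U}(t)z\in D(\mathcal{L})$ solves $$\frac{d}{dt}\mathcal{U}(t)z=\mathcal{U}(t)\mathcal{PL}z+\mathcal{G}(t)\mathcal{QL}z+\int_0^t K(t-s)\,\mathcal{U}(s)z\,ds,\qquad t\ge0,$$ where $K(t):=(\mathcal{G}(t)\mathcal{QL}z,\mathcal{Q}\mathcal{L}^\dagger z)(z,z)^{-1}$.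
   Context: The scalar product $(\cdot,\cdot)$ on $H$ is conjugate-linear in its second argument. The generator is $\mathcal{L}x:=\lim_{h\searrow 0}\frac1h[\mathcal{U}(h)x-x]$ on the set $D(\mathcal{L})$ where the limit exists. $\dagger$ denotes the adjoint, the overbar the closure of a closable operator; $D(\overline{\mathcal{QL}}\mathcal{Q})=\{x:\mathcal{Q}x\in D(\overline{\mathcal{QL}})\}$. The integral is a Bochner integral. *)

theory Defs
  imports "HOL-Analysis.Analysis"
begin

class complex_inner = real_normed_vector +
  fixes scaleC :: "complex \<Rightarrow> 'a \<Rightarrow> 'a"
    and cinner :: "'a \<Rightarrow> 'a \<Rightarrow> complex"
  assumes scaleC_add_right: "scaleC a (x + y) = scaleC a x + scaleC a y"
    and scaleC_add_left: "scaleC (a + b) x = scaleC a x + scaleC b x"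
    and scaleC_scaleC: "scaleC a (scaleC b x) = scaleC (a * b) x"
    and scaleC_one: "scaleC 1 x = x"
    and scaleR_scaleC: "scaleR r x = scaleC (complex_of_real r) x"
    and cinner_commute: "cinner x y = cnj (cinner y x)"
    and cinner_add_left: "cinner (x + y) w = cinner x w + cinner y w"
    and cinner_scaleC_left: "cinner (scaleC c x) y = c * cinner x y"
    and cinner_self_real: "Im (cinner x x) = 0"
    and cinner_self_nonneg: "0 \<le> Re (cinner x x)"
    and cinner_self_eq_zero: "cinner x x = 0 \<longleftrightarrow> x = 0"
    and norm_eq_sqrt_cinner: "norm x = sqrt (Re (cinner x x))"

text \<open>A complex Hilbert space is a complete complex inner product space:
type class constraint \<open>{complex_inner, complete_space}\<close>.\<close>

definition bounded_clinear :: "('a::complex_inner \<Rightarrow> 'b::complex_inner) \<Rightarrow> bool" where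
  "bounded_clinear f \<longleftrightarrow> bounded_linear f \<and> (\<forall>c x. f (scaleC c x) = scaleC c (f x))"

definition c0_semigroup :: "(real \<Rightarrow> 'a::complex_inner \<Rightarrow> 'a) \<Rightarrow> bool" where
  "c0_semigroup U \<longleftrightarrow>
     (\<forall>t\<ge>0. bounded_clinear (U t)) \<and>
     U 0 = id \<and>
     (\<forall>s\<ge>0. \<forall>t\<ge>0. U (s + t) = U s \<circ> U t) \<and>
     (\<forall>x. continuous_on {0..} (\<lambda>t. U t x))"

definition gen_dom :: "(real \<Rightarrow> 'a::complex_inner \<Rightarrow> 'a) \<Rightarrow> 'a set" where
  "gen_dom U = {x. \<exists>y. ((\<lambda>h. (1 / h) *\<^sub>R (U h x - x)) \<longlongrightarrow> y) (at_right 0)}"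

text \<open>The generator (meaningful on \<open>gen_dom U\<close>).\<close>
definition gen :: "(real \<Rightarrow> 'a::complex_inner \<Rightarrow> 'a) \<Rightarrow> 'a \<Rightarrow> 'a" where
  "gen U x = Lim (at_right 0) (\<lambda>h. (1 / h) *\<^sub>R (U h x - x))"

definition adj_dom :: "'a set \<Rightarrow> ('a::complex_inner \<Rightarrow> 'a) \<Rightarrow> 'a set" where
  "adj_dom D A = {y. \<exists>w. \<forall>x\<in>D. cinner (A x) y = cinner x w}"

definition adj :: "'a set \<Rightarrow> ('a::complex_inner \<Rightarrow> 'a) \<Rightarrow> 'a \<Rightarrow> 'a" where
  "adj D A y = (THE w. \<forall>x\<in>D. cinner (A x) y = cinner x w)"

definition graph :: "'a set \<Rightarrow> ('a \<Rightarrow> 'b) \<Rightarrow> ('a \<times> 'b) set" where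
  "graph D A = {(x, A x) | x. x \<in> D}"

definition clos_dom :: "'a set \<Rightarrow> ('a::complex_inner \<Rightarrow> 'a) \<Rightarrow> 'a set" where
  "clos_dom D A = {x. \<exists>y. (x, y) \<in> closure (graph D A)}"

definition clos :: "'a set \<Rightarrow> ('a::complex_inner \<Rightarrow> 'a) \<Rightarrow> 'a \<Rightarrow> 'a" where
  "clos D A x = (THE y. (x, y) \<in> closure (graph D A))"

definition projP :: "'a::complex_inner \<Rightarrow> 'a \<Rightarrow> 'a" where
  "projP z x = scaleC (cinner x z / cinner z z) z"

definition projQ :: "'a::complex_inner \<Rightarrow> 'a \<Rightarrow> 'a" where
  "projQ z x = x - projP z x"

end

theory Submission
  imports Defs
begin

(* The orbit u(t) = U(t) z satisfies u' = U(t) L z = U(t) P L z + U(t) Q L z, so everything rests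
   on rewriting U(t) Q L z. Since z \<in> D(L\<^sup>\<dagger>), the operator Q L = L - (., L\<^sup>\<dagger> z) z / (z, z) is a
   bounded perturbation of the closed operator L, hence itself closed on D(L); so the generator of
   G is Q L Q = L - B on D(L), with B = P L + Q L P bounded. Duhamel's formula for bounded
   perturbations gives U(t) y - G(t) y = \<integral>\<^sub>0\<^sup>t U(t - s) B G(s) y ds for every y. For y = Q L z
   the orbit G(s) y stays orthogonal to z, because (Q L Q x, z) = 0, so B G(s) y collapses to
   (G(s) y, Q L\<^sup>\<dagger> z) z / (z, z), and the substitution s \<mapsto> t - s yields the memory term. *)

section \<open>Complex inner product spaces\<close>

lemma cinner_zero_left [simp]: "cinner 0 y = 0"
  using cinner_add_left[of 0 0 y] by simp

lemma cinner_zero_right [simp]: "cinner x 0 = 0"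
  using cinner_commute[of x 0] by simp

lemma cinner_diff_left: "cinner (x - y) w = cinner x w - cinner y w"
  using cinner_add_left[of "x - y" y w] by simp

lemma cinner_add_right: "cinner x (y + w) = cinner x y + cinner x w"
  by (metis cinner_commute cinner_add_left complex_cnj_add)

lemma cinner_diff_right: "cinner x (y - w) = cinner x y - cinner x w"
  by (metis cinner_commute cinner_diff_left complex_cnj_diff)

lemma cinner_scaleC_right: "cinner x (scaleC c y) = cnj c * cinner x y"
  by (metis cinner_commute cinner_scaleC_left complex_cnj_mult)

lemma cinner_self_eq_power2_norm: "cinner x x = complex_of_real ((norm x)\<^sup>2)"
  using norm_eq_sqrt_cinner[of x] cinner_self_nonneg[of x] cinner_self_real[of x]
  by (simp add: complex_eq_iff)

lemma scaleC_zero_left [simp]: "scaleC 0 x = 0"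
  using scaleC_add_left[of 0 0 x] by simp

lemma scaleC_diff_right: "scaleC c (x - y) = scaleC c x - scaleC c y"
  using scaleC_add_right[of c "x - y" y] by simp

lemma scaleC_diff_left: "scaleC (a - b) x = scaleC a x - scaleC b x"
  using scaleC_add_left[of "a - b" b x] by simp

lemma norm_scaleC: "norm (scaleC c x) = cmod c * norm x"
proof -
  have "complex_of_real ((norm (scaleC c x))\<^sup>2) = cinner (scaleC c x) (scaleC c x)"
    by (rule cinner_self_eq_power2_norm[symmetric])
  also have "\<dots> = c * cnj c * cinner x x"
    by (simp add: cinner_scaleC_left cinner_scaleC_right)
  also have "\<dots> = complex_of_real ((cmod c * norm x)\<^sup>2)"
    by (simp only: complex_norm_square[symmetric] cinner_self_eq_power2_norm of_real_mult[symmetric]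
        power_mult_distrib)
  finally have "(norm (scaleC c x))\<^sup>2 = (cmod c * norm x)\<^sup>2"
    by (simp only: of_real_eq_iff)
  then show ?thesis
    by simp
qed

lemma norm_cinner_le: "cmod (cinner x y) \<le> norm x * norm y"
proof (cases "y = 0")
  case False
  define k where "k = cinner x y / cinner y y"
  have yy: "cinner y y = complex_of_real ((norm y)\<^sup>2)" "(norm y)\<^sup>2 > 0"
    using False by (simp_all add: cinner_self_eq_power2_norm)
  \<comment> \<open>\<open>x - k y\<close> is orthogonal to \<open>y\<close>, so its squared norm is \<open>(x - k y, x)\<close>.\<close>
  have "cinner (x - scaleC k y) y = 0"
    using False by (simp add: k_def cinner_diff_left cinner_scaleC_left cinner_self_eq_zero)
  then have "cinner (x - scaleC k y) (x - scaleC k y) = cinner x x - k * cinner y x"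
    by (simp add: cinner_diff_right cinner_scaleC_right cinner_diff_left cinner_scaleC_left)
  also have "\<dots> = complex_of_real ((norm x)\<^sup>2 - (cmod (cinner x y))\<^sup>2 / (norm y)\<^sup>2)"
    using complex_norm_square[of "cinner x y"]
    by (simp add: k_def yy cinner_self_eq_power2_norm cinner_commute[of y x])
  finally have "(cmod (cinner x y))\<^sup>2 / (norm y)\<^sup>2 \<le> (norm x)\<^sup>2"
    using cinner_self_nonneg[of "x - scaleC k y"] by simp
  then have "(cmod (cinner x y))\<^sup>2 \<le> (norm x * norm y)\<^sup>2"
    using yy(2) by (simp add: pos_divide_le_eq power_mult_distrib)
  then show ?thesis
    by (rule power2_le_imp_le) simp
qed simp

lemma bounded_bilinear_cinner: "bounded_bilinear cinner"
proof
  show "\<exists>K. \<forall>a b. norm (cinner a b) \<le> norm a * norm b * K"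
    by (rule exI[of _ 1]) (simp add: norm_cinner_le)
qed (simp_all add: cinner_add_left cinner_add_right scaleR_scaleC cinner_scaleC_left
    cinner_scaleC_right scaleR_conv_of_real)

lemma bounded_bilinear_scaleC: "bounded_bilinear scaleC"
proof
  show "\<exists>K. \<forall>a b. norm (scaleC a b) \<le> norm a * norm b * K"
    by (rule exI[of _ 1]) (simp add: norm_scaleC)
qed (simp_all add: scaleC_add_left scaleC_add_right scaleR_scaleC
    scaleC_scaleC scaleR_conv_of_real mult.commute)

section \<open>Vector-valued calculus on the real line\<close>

text \<open>The sort \<open>{real_normed_vector, complete_space}\<close> is not below \<open>banach\<close>, to which the
  integration theory of HOL-Analysis is restricted. Its results are therefore transported
  through an isometric copy of the type that is an instance of \<open>banach\<close>.\<close>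

typedef (overloaded) ('a::real_normed_vector) banach_copy = "UNIV :: 'a set" ..

setup_lifting type_definition_banach_copy

instantiation banach_copy :: (real_normed_vector) real_normed_vector
begin

lift_definition zero_banach_copy :: "'a banach_copy" is 0 .
lift_definition plus_banach_copy :: "'a banach_copy \<Rightarrow> 'a banach_copy \<Rightarrow> 'a banach_copy" is "(+)" .
lift_definition minus_banach_copy :: "'a banach_copy \<Rightarrow> 'a banach_copy \<Rightarrow> 'a banach_copy" is "(-)" .
lift_definition uminus_banach_copy :: "'a banach_copy \<Rightarrow> 'a banach_copy" is uminus .
lift_definition scaleR_banach_copy :: "real \<Rightarrow> 'a banach_copy \<Rightarrow> 'a banach_copy" is scaleR .
lift_definition norm_banach_copy :: "'a banach_copy \<Rightarrow> real" is norm .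
lift_definition sgn_banach_copy :: "'a banach_copy \<Rightarrow> 'a banach_copy" is sgn .
lift_definition dist_banach_copy :: "'a banach_copy \<Rightarrow> 'a banach_copy \<Rightarrow> real" is dist .

definition uniformity_banach_copy :: "('a banach_copy \<times> 'a banach_copy) filter" where
  "uniformity_banach_copy = (INF e\<in>{0<..}. principal {(x, y). dist x y < e})"

definition open_banach_copy :: "'a banach_copy set \<Rightarrow> bool" where
  "open_banach_copy S = (\<forall>x\<in>S. \<forall>\<^sub>F (x', y) in uniformity. x' = x \<longrightarrow> y \<in> S)"

instance
proof
  fix a b c :: "'a banach_copy" and r s :: real
  show "a + b + c = a + (b + c)" by transfer (simp add: algebra_simps)
  show "a + b = b + a" by transfer (simp add: algebra_simps)
  show "0 + a = a" by transfer simp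
  show "- a + a = 0" by transfer simp
  show "a - b = a + - b" by transfer simp
  show "r *\<^sub>R (a + b) = r *\<^sub>R a + r *\<^sub>R b" by transfer (simp add: scaleR_add_right)
  show "(r + s) *\<^sub>R a = r *\<^sub>R a + s *\<^sub>R a" by transfer (simp add: scaleR_add_left)
  show "r *\<^sub>R s *\<^sub>R a = (r * s) *\<^sub>R a" by transfer simp
  show "1 *\<^sub>R a = a" by transfer simp
  show "dist a b = norm (a - b)" by transfer (simp add: dist_norm)
  show "sgn a = inverse (norm a) *\<^sub>R a" by transfer (simp add: sgn_div_norm)
  show "(norm a = 0) = (a = 0)" by transfer simp
  show "norm (a + b) \<le> norm a + norm b" by transfer (rule norm_triangle_ineq)
  show "norm (r *\<^sub>R a) = \<bar>r\<bar> * norm a" by transfer simp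
qed (simp_all add: uniformity_banach_copy_def open_banach_copy_def)

end

instance banach_copy :: ("{real_normed_vector, complete_space}") banach
proof
  fix X :: "nat \<Rightarrow> 'a banach_copy"
  assume "Cauchy X"
  then have "Cauchy (\<lambda>n. Rep_banach_copy (X n))"
    unfolding Cauchy_def by transfer
  then obtain L where "(\<lambda>n. Rep_banach_copy (X n)) \<longlonglongrightarrow> L"
    using Cauchy_convergent_iff convergent_def by blast
  then have "X \<longlonglongrightarrow> Abs_banach_copy L"
    unfolding tendsto_iff by transfer
  then show "convergent X"
    by (auto simp: convergent_def)
qed

lemma bounded_linear_Rep_banach_copy: "bounded_linear Rep_banach_copy"
  by (rule bounded_linear_intro[where K=1]; transfer; simp)

lemma bounded_linear_Abs_banach_copy: "bounded_linear Abs_banach_copy"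
  by (rule bounded_linear_intro[where K=1]; transfer; simp)

lemma has_integral_banach_copy:
  fixes f :: "real \<Rightarrow> 'a::real_normed_vector"
  shows "((\<lambda>x. Abs_banach_copy (f x)) has_integral Abs_banach_copy i) S \<longleftrightarrow> (f has_integral i) S"
proof
  assume "((\<lambda>x. Abs_banach_copy (f x)) has_integral Abs_banach_copy i) S"
  from has_integral_linear[OF this bounded_linear_Rep_banach_copy]
  show "(f has_integral i) S"
    by (simp add: o_def Abs_banach_copy_inverse)
next
  assume "(f has_integral i) S"
  from has_integral_linear[OF this bounded_linear_Abs_banach_copy]
  show "((\<lambda>x. Abs_banach_copy (f x)) has_integral Abs_banach_copy i) S"
    by (simp add: o_def)
qed

lemma integrable_continuous_interval_complete:
  fixes f :: "real \<Rightarrow> 'a::{real_normed_vector, complete_space}"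
  assumes "continuous_on {a..b} f"
  shows "f integrable_on {a..b}"
proof -
  have "continuous_on {a..b} (\<lambda>x. Abs_banach_copy (f x))"
    by (rule bounded_linear.continuous_on[OF bounded_linear_Abs_banach_copy assms])
  then obtain j where "((\<lambda>x. Abs_banach_copy (f x)) has_integral j) {a..b}"
    using integrable_continuous_interval by blast
  then have "((\<lambda>x. Abs_banach_copy (f x)) has_integral Abs_banach_copy (Rep_banach_copy j)) {a..b}"
    by (simp add: Rep_banach_copy_inverse)
  then show ?thesis
    unfolding has_integral_banach_copy by blast
qed

lemma integral_banach_copy:
  fixes f :: "real \<Rightarrow> 'a::real_normed_vector"
  assumes "f integrable_on S"
  shows "integral S (\<lambda>x. Abs_banach_copy (f x)) = Abs_banach_copy (integral S f)"
  by (intro integral_unique) (simp add: has_integral_banach_copy integrable_integral[OF assms])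

lemma integral_has_vector_derivative_complete:
  fixes f :: "real \<Rightarrow> 'a::{real_normed_vector, complete_space}"
  assumes f: "continuous_on {a..b} f" and x: "x \<in> {a..b}"
  shows "((\<lambda>u. integral {a..u} f) has_vector_derivative f x) (at x within {a..b})"
proof -
  have "continuous_on {a..b} (\<lambda>x. Abs_banach_copy (f x))"
    by (rule bounded_linear.continuous_on[OF bounded_linear_Abs_banach_copy f])
  from integral_has_vector_derivative[OF this x]
  have "((\<lambda>u. Rep_banach_copy (integral {a..u} (\<lambda>x. Abs_banach_copy (f x)))) has_vector_derivative
      f x) (at x within {a..b})"
    using bounded_linear.has_vector_derivative[OF bounded_linear_Rep_banach_copy]
    by (fastforce simp: Abs_banach_copy_inverse)
  moreover have "integral {a..u} f = Rep_banach_copy (integral {a..u} (\<lambda>x. Abs_banach_copy (f x)))"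
    if "u \<in> {a..b}" for u
  proof -
    have "f integrable_on {a..u}"
      using that by (intro integrable_continuous_interval_complete continuous_on_subset[OF f]) auto
    then show ?thesis
      by (simp add: integral_banach_copy Abs_banach_copy_inverse)
  qed
  ultimately show ?thesis
    by (rule has_vector_derivative_transform[OF x, rotated])
qed

lemma has_integral_combine_complete:
  fixes f :: "real \<Rightarrow> 'a::{real_normed_vector, complete_space}"
  assumes "a \<le> c" "c \<le> b" "(f has_integral i) {a..c}" "(f has_integral j) {c..b}"
  shows "(f has_integral (i + j)) {a..b}"
proof -
  have "((\<lambda>x. Abs_banach_copy (f x)) has_integral Abs_banach_copy i + Abs_banach_copy j) {a..b}"
    using assms(3,4) by (intro has_integral_combine[OF assms(1,2)]) (simp_all add: has_integral_banach_copy)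
  then show ?thesis
    by (simp add: has_integral_banach_copy
        linear_simps(1)[OF bounded_linear_Abs_banach_copy, symmetric])
qed

lemma has_vector_derivative_iff_difference_quotient:
  fixes f :: "real \<Rightarrow> 'a::real_normed_vector"
  shows "(f has_vector_derivative D) (at x within S) \<longleftrightarrow>
    ((\<lambda>y. (1 / (y - x)) *\<^sub>R (f y - f x)) \<longlongrightarrow> D) (at x within S)"
proof -
  have "norm ((f y - f x) - (y - x) *\<^sub>R D) / norm (y - x) = norm ((1 / (y - x)) *\<^sub>R (f y - f x) - D)"
    if "y \<noteq> x" for y
  proof -
    have "(1 / (y - x)) *\<^sub>R ((f y - f x) - (y - x) *\<^sub>R D) = (1 / (y - x)) *\<^sub>R (f y - f x) - D"
      using that by (simp add: scaleR_diff_right)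
    then have "norm ((1 / (y - x)) *\<^sub>R ((f y - f x) - (y - x) *\<^sub>R D)) = norm ((1 / (y - x)) *\<^sub>R (f y - f x) - D)"
      by (rule arg_cong)
    then show ?thesis
      by (simp add: divide_inverse mult.commute)
  qed
  then have "((\<lambda>y. norm ((f y - f x) - (y - x) *\<^sub>R D) / norm (y - x)) \<longlongrightarrow> 0) (at x within S) \<longleftrightarrow>
      ((\<lambda>y. norm ((1 / (y - x)) *\<^sub>R (f y - f x) - D)) \<longlongrightarrow> 0) (at x within S)"
    by (intro tendsto_cong) (auto simp: eventually_at_filter)
  also have "\<dots> \<longleftrightarrow> ((\<lambda>y. (1 / (y - x)) *\<^sub>R (f y - f x)) \<longlongrightarrow> D) (at x within S)"
    by (simp only: tendsto_norm_zero_iff LIM_zero_iff)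
  finally show ?thesis
    by (simp only: has_vector_derivative_def has_derivative_iff_norm bounded_linear_scaleR_left simp_thms)
qed

lemma fundamental_theorem_of_calculus_within:
  fixes f :: "real \<Rightarrow> 'a::real_normed_vector"
  assumes "a \<le> b"
    and "\<And>x. x \<in> {a..b} \<Longrightarrow> (f has_vector_derivative f' x) (at x within {a..b})"
  shows "(f' has_integral (f b - f a)) {a..b}"
proof (rule fundamental_theorem_of_calculus_interior[OF assms(1)])
  show "continuous_on {a..b} f"
    using assms(2) by (rule continuous_on_vector_derivative)
next
  fix x assume "x \<in> {a<..<b}"
  then show "(f has_vector_derivative f' x) (at x)"
    using assms(2)[of x] at_within_interior[of x "{a..b}"] by simp
qed

lemma has_integral_reflect_interval:
  fixes f :: "real \<Rightarrow> 'a::real_normed_vector"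
  shows "((\<lambda>s. f (t - s)) has_integral i) {0..t} \<longleftrightarrow> (f has_integral i) {0..t}"
proof -
  have "((\<lambda>s. f (t - s)) has_integral i) {0..t} \<longleftrightarrow> ((\<lambda>s. f (- s)) has_integral i) {-t..0}"
    using has_integral_shift_cbox_iff[of "\<lambda>s. f (- s)" "-t" i 0 t] by (simp add: o_def)
  then show ?thesis
    using has_integral_reflect_real[where f=f and a=0 and b=t] by simp
qed

text \<open>Unlike \<open>uniform_limit_integral\<close>, this needs no completeness of the codomain.\<close>

lemma has_integral_uniform_limit_unique:
  fixes f :: "nat \<Rightarrow> real \<Rightarrow> 'a::real_normed_vector"
  assumes "a \<le> b"
    and f: "\<And>n. (f n has_integral I n) {a..b}" and g: "(g has_integral J) {a..b}"
    and bound: "\<And>n s. s \<in> {a..b} \<Longrightarrow> norm (f n s - g s) \<le> e n"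
    and e: "e \<longlonglongrightarrow> 0" and I: "I \<longlonglongrightarrow> K"
  shows "J = K"
proof -
  have "norm (I n - J) \<le> e n * (b - a)" for n
  proof -
    have "0 \<le> e n"
      using bound[of a n] \<open>a \<le> b\<close> by (meson atLeastAtMost_iff norm_ge_zero order.trans order_refl)
    moreover have "\<forall>s\<in>{a..b} - {}. norm (f n s - g s) \<le> e n"
      using bound by simp
    ultimately show ?thesis
      using has_integral_bound_real[OF _ finite.emptyI has_integral_diff[OF f g]] \<open>a \<le> b\<close> by simp
  qed
  moreover have "(\<lambda>n. e n * (b - a)) \<longlonglongrightarrow> 0"
    using tendsto_mult_left_zero[OF e] by simp
  ultimately have "(\<lambda>n. I n - J) \<longlonglongrightarrow> 0"
    by (rule Lim_null_comparison[OF always_eventually[OF allI]])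
  then have "I \<longlonglongrightarrow> J"
    by (simp add: LIM_zero_iff)
  then show ?thesis
    using I LIMSEQ_unique by blast
qed

section \<open>Strongly continuous semigroups\<close>

lemma uniformly_bounded_on_some_ball:
  fixes T :: "'i \<Rightarrow> 'a::{real_normed_vector, complete_space} \<Rightarrow> 'b::real_normed_vector"
  assumes bl: "\<And>i. i \<in> I \<Longrightarrow> bounded_linear (T i)"
    and pointwise: "\<And>x. \<exists>B. \<forall>i\<in>I. norm (T i x) \<le> B"
  obtains r x0 n where "r > 0" "\<And>i y. i \<in> I \<Longrightarrow> y \<in> ball x0 r \<Longrightarrow> norm (T i y) \<le> real n"
proof -
  define E where "E n = {x. \<forall>i\<in>I. norm (T i x) \<le> real n}" for n :: nat
  have closed_E: "closed (E n)" for n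
  proof -
    have "closed {x. norm (T i x) \<le> real n}" if "i \<in> I" for i
      by (intro closed_Collect_le continuous_on_norm linear_continuous_on bl that continuous_on_const)
    moreover have "E n = (\<Inter>i\<in>I. {x. norm (T i x) \<le> real n})"
      by (auto simp: E_def)
    ultimately show ?thesis
      by auto
  qed
  have cover: "\<Union>(range E) = UNIV"
  proof -
    have "x \<in> \<Union>(range E)" for x
    proof -
      obtain B where "\<forall>i\<in>I. norm (T i x) \<le> B"
        using pointwise by blast
      then have "x \<in> E (nat \<lceil>B\<rceil>)"
        unfolding E_def by (auto intro: order_trans[OF _ real_nat_ceiling_ge])
      then show ?thesis
        by blast
    qed
    then show ?thesis
      by auto
  qed
  have "\<exists>n. interior (E n) \<noteq> {}"
  proof (rule ccontr)
    assume "\<not> ?thesis"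
    then have "euclidean interior_of \<Union>(range E) = {}"
      using closed_E by (intro Baire_category_alt) (auto simp: completely_metrizable_space_euclidean)
    then show False
      using cover by simp
  qed
  then obtain n x0 where "x0 \<in> interior (E n)"
    by blast
  then obtain r where r: "r > 0" "ball x0 r \<subseteq> E n"
    by (auto simp: mem_interior)
  show ?thesis
  proof (rule that[OF r(1)])
    fix i y assume "i \<in> I" "y \<in> ball x0 r"
    then show "norm (T i y) \<le> real n"
      using r(2) by (auto simp: E_def)
  qed
qed

lemma uniform_boundedness:
  fixes T :: "'i \<Rightarrow> 'a::{real_normed_vector, complete_space} \<Rightarrow> 'b::real_normed_vector"
  assumes bl: "\<And>i. i \<in> I \<Longrightarrow> bounded_linear (T i)"
    and pointwise: "\<And>x. \<exists>B. \<forall>i\<in>I. norm (T i x) \<le> B"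
  shows "\<exists>M\<ge>0. \<forall>i\<in>I. \<forall>x. norm (T i x) \<le> M * norm x"
proof -
  obtain r x0 n where r: "r > 0"
    and ball: "\<And>i y. i \<in> I \<Longrightarrow> y \<in> ball x0 r \<Longrightarrow> norm (T i y) \<le> real n"
    using uniformly_bounded_on_some_ball[OF bl pointwise] by metis
  have small: "norm (T i y) \<le> 2 * real n" if i: "i \<in> I" and y: "norm y < r" for i y
  proof -
    have "x0 + y \<in> ball x0 r" "x0 \<in> ball x0 r"
      using r y by (auto simp: dist_norm)
    then have "norm (T i (x0 + y)) \<le> real n" "norm (T i x0) \<le> real n"
      by (simp_all add: ball[OF i])
    moreover have "T i y = T i (x0 + y) - T i x0"
      using bl[OF i] by (simp add: linear_simps)
    ultimately show ?thesis
      by (metis norm_triangle_ineq4 order_trans add_mono mult_2)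
  qed
  have "norm (T i x) \<le> (4 * real n / r) * norm x" if i: "i \<in> I" for i x
  proof (cases "x = 0")
    case True
    then show ?thesis
      using bl[OF i] by (simp add: linear_simps)
  next
    case False
    define y where "y = (r / (2 * norm x)) *\<^sub>R x"
    have "T i x = ((2 * norm x) / r) *\<^sub>R T i y"
      using False r bl[OF i] by (simp add: y_def linear_simps)
    then have "norm (T i x) = ((2 * norm x) / r) * norm (T i y)"
      using r by simp
    also have "\<dots> \<le> ((2 * norm x) / r) * (2 * real n)"
      using False r by (intro mult_left_mono small i) (simp_all add: y_def)
    also have "\<dots> = (4 * real n / r) * norm x"
      by (simp add: field_simps)
    finally show ?thesis .
  qed
  then show ?thesis
    using r by (intro exI[of _ "4 * real n / r"]) auto
qed

locale strongly_continuous_semigroup =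
  fixes U :: "real \<Rightarrow> 'a::{complex_inner, complete_space} \<Rightarrow> 'a"
  assumes c0: "c0_semigroup U"
begin

lemma bounded_linear_op: "t \<ge> 0 \<Longrightarrow> bounded_linear (U t)"
  using c0 by (auto simp: c0_semigroup_def bounded_clinear_def)

lemma scaleC_commute: "t \<ge> 0 \<Longrightarrow> U t (scaleC c x) = scaleC c (U t x)"
  using c0 by (auto simp: c0_semigroup_def bounded_clinear_def)

lemma at_zero [simp]: "U 0 x = x"
  using c0 by (auto simp: c0_semigroup_def)

lemma semigroup_law: "s \<ge> 0 \<Longrightarrow> t \<ge> 0 \<Longrightarrow> U (s + t) x = U s (U t x)"
  using c0 by (auto simp: c0_semigroup_def)

lemma continuous_orbit: "continuous_on {0..} (\<lambda>t. U t x)"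
  using c0 by (auto simp: c0_semigroup_def)

lemma commute: "s \<ge> 0 \<Longrightarrow> t \<ge> 0 \<Longrightarrow> U s (U t x) = U t (U s x)"
  by (metis semigroup_law add.commute)

lemma op_simps:
  assumes "t \<ge> 0"
  shows "U t (x + y) = U t x + U t y" "U t (x - y) = U t x - U t y"
    "U t (r *\<^sub>R x) = r *\<^sub>R U t x" "U t 0 = 0"
  using bounded_linear_op[OF assms] by (simp_all add: linear_simps)

lemma integrable_orbit: "(\<lambda>s. U s x) integrable_on {0..h}"
  by (intro integrable_continuous_interval_complete continuous_on_subset[OF continuous_orbit]) auto

lemma norm_bound: "\<exists>M\<ge>0. \<forall>s\<in>{0..T}. \<forall>x. norm (U s x) \<le> M * norm x"
proof (rule uniform_boundedness)
  fix x
  have "compact ((\<lambda>t. U t x) ` {0..T})"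
    by (intro compact_continuous_image continuous_on_subset[OF continuous_orbit]) auto
  then show "\<exists>B. \<forall>s\<in>{0..T}. norm (U s x) \<le> B"
    by (meson compact_imp_bounded bounded_iff imageI)
qed (use bounded_linear_op in auto)

lemma tendsto_joint:
  assumes f: "(f \<longlongrightarrow> x) F" and r: "(r \<longlongrightarrow> r0) F"
    and nonneg: "eventually (\<lambda>i. r i \<ge> 0) F" and "r0 \<ge> 0"
  shows "((\<lambda>i. U (r i) (f i)) \<longlongrightarrow> U r0 x) F"
proof -
  obtain M where M: "\<And>s y. s \<in> {0..r0 + 1} \<Longrightarrow> norm (U s y) \<le> M * norm y"
    using norm_bound[of "r0 + 1"] by blast
  have "eventually (\<lambda>i. r i < r0 + 1) F"
    using order_tendstoD(2)[OF r] by simp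
  with nonneg have ev: "eventually (\<lambda>i. r i \<in> {0..r0 + 1}) F"
    by eventually_elim auto
  have orbit: "((\<lambda>i. U (r i) x) \<longlongrightarrow> U r0 x) F"
    using continuous_on_tendsto_compose[OF continuous_orbit r] nonneg \<open>r0 \<ge> 0\<close> by auto
  have null: "((\<lambda>i. U (r i) (f i - x)) \<longlongrightarrow> 0) F"
  proof (rule Lim_null_comparison)
    show "eventually (\<lambda>i. norm (U (r i) (f i - x)) \<le> M * norm (f i - x)) F"
      using ev by eventually_elim (rule M)
    show "((\<lambda>i. M * norm (f i - x)) \<longlongrightarrow> 0) F"
      by (rule tendsto_mult_right_zero[OF tendsto_norm_zero[OF LIM_zero[OF f]]])
  qed
  have "((\<lambda>i. U (r i) (f i - x) + U (r i) x) \<longlongrightarrow> 0 + U r0 x) F"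
    by (rule tendsto_add[OF null orbit])
  moreover have "eventually (\<lambda>i. U (r i) (f i - x) + U (r i) x = U (r i) (f i)) F"
    using nonneg by eventually_elim (simp add: op_simps)
  ultimately show ?thesis
    by (simp add: tendsto_cong)
qed

lemma generator_tendsto:
  assumes "x \<in> gen_dom U"
  shows "((\<lambda>h. (1 / h) *\<^sub>R (U h x - x)) \<longlongrightarrow> gen U x) (at_right 0)"
proof -
  obtain y where y: "((\<lambda>h. (1 / h) *\<^sub>R (U h x - x)) \<longlongrightarrow> y) (at_right 0)"
    using assms by (auto simp: gen_dom_def)
  then have "gen U x = y"
    unfolding gen_def by (intro tendsto_Lim) auto
  then show ?thesis
    using y by simp
qed

lemma generatorI:
  assumes "((\<lambda>h. (1 / h) *\<^sub>R (U h x - x)) \<longlongrightarrow> y) (at_right 0)"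
  shows "x \<in> gen_dom U" "gen U x = y"
  using assms unfolding gen_dom_def gen_def by (auto intro: tendsto_Lim)

lemma generator_commuting_operator:
  assumes T: "bounded_linear T" and commute: "\<And>h y. h > 0 \<Longrightarrow> T (U h y) = U h (T y)"
    and x: "x \<in> gen_dom U"
  shows "T x \<in> gen_dom U" "gen U (T x) = T (gen U x)"
proof -
  have "((\<lambda>h. T ((1 / h) *\<^sub>R (U h x - x))) \<longlongrightarrow> T (gen U x)) (at_right 0)"
    by (rule bounded_linear.tendsto[OF T generator_tendsto[OF x]])
  moreover have "eventually (\<lambda>h. T ((1 / h) *\<^sub>R (U h x - x)) = (1 / h) *\<^sub>R (U h (T x) - T x))
      (at_right 0)"
    using eventually_at_right_less[of 0]
    by eventually_elim (simp add: commute linear_simps[OF T])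
  ultimately have "((\<lambda>h. (1 / h) *\<^sub>R (U h (T x) - T x)) \<longlongrightarrow> T (gen U x)) (at_right 0)"
    by (simp add: tendsto_cong)
  then show "T x \<in> gen_dom U" "gen U (T x) = T (gen U x)"
    by (rule generatorI)+
qed

lemma generator_scaleC:
  "x \<in> gen_dom U \<Longrightarrow> scaleC c x \<in> gen_dom U"
  "x \<in> gen_dom U \<Longrightarrow> gen U (scaleC c x) = scaleC c (gen U x)"
  using generator_commuting_operator[OF bounded_bilinear.bounded_linear_right[OF bounded_bilinear_scaleC]]
  by (simp_all add: scaleC_commute)

lemma generator_orbit:
  assumes "x \<in> gen_dom U" "t \<ge> 0"
  shows "U t x \<in> gen_dom U" "gen U (U t x) = U t (gen U x)"
  using generator_commuting_operator[OF bounded_linear_op[OF \<open>t \<ge> 0\<close>] commute \<open>x \<in> gen_dom U\<close>]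
    \<open>t \<ge> 0\<close> by simp_all

lemma generator_add:
  assumes "x \<in> gen_dom U" "y \<in> gen_dom U"
  shows "x + y \<in> gen_dom U" "gen U (x + y) = gen U x + gen U y"
proof -
  have "((\<lambda>h. (1 / h) *\<^sub>R (U h x - x) + (1 / h) *\<^sub>R (U h y - y)) \<longlongrightarrow> gen U x + gen U y) (at_right 0)"
    by (intro tendsto_add generator_tendsto assms)
  moreover have "eventually (\<lambda>h. (1 / h) *\<^sub>R (U h x - x) + (1 / h) *\<^sub>R (U h y - y) =
      (1 / h) *\<^sub>R (U h (x + y) - (x + y))) (at_right 0)"
    using eventually_at_right_less[of 0]
    by eventually_elim (simp add: op_simps algebra_simps)
  ultimately have "((\<lambda>h. (1 / h) *\<^sub>R (U h (x + y) - (x + y))) \<longlongrightarrow> gen U x + gen U y) (at_right 0)"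
    by (simp add: tendsto_cong)
  then show "x + y \<in> gen_dom U" "gen U (x + y) = gen U x + gen U y"
    by (rule generatorI)+
qed

lemma generator_diff:
  assumes "x \<in> gen_dom U" "y \<in> gen_dom U"
  shows "x - y \<in> gen_dom U" "gen U (x - y) = gen U x - gen U y"
proof -
  have neg: "scaleC (-1) v = - v" for v :: 'a
    using scaleR_scaleC[of "-1" v] by simp
  show "x - y \<in> gen_dom U" "gen U (x - y) = gen U x - gen U y"
    using generator_add[OF assms(1) generator_scaleC(1)[OF assms(2), of "-1"]]
      generator_scaleC(2)[OF assms(2), of "-1"] by (simp_all add: neg)
qed

lemma has_vector_derivative_orbit:
  assumes x: "x \<in> gen_dom U" and t: "t \<ge> 0"
  shows "((\<lambda>s. U s x) has_vector_derivative U t (gen U x)) (at t within {0..})"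
proof -
  \<comment> \<open>Both one-sided difference quotients at \<open>t\<close> are \<open>U (min y t)\<close> applied to the right
    difference quotient at \<open>0\<close> with step \<open>\<bar>y - t\<bar>\<close>.\<close>
  define q where "q y = (1 / \<bar>y - t\<bar>) *\<^sub>R (U \<bar>y - t\<bar> x - x)" for y
  have "filterlim (\<lambda>y. \<bar>y - t\<bar>) (at_right 0) (at t within {0..})"
    unfolding filterlim_at
    by (auto simp: eventually_at_filter intro!: tendsto_eq_intros)
  then have "(q \<longlongrightarrow> gen U x) (at t within {0..})"
    unfolding q_def by (rule filterlim_compose[OF generator_tendsto[OF x]])
  then have "((\<lambda>y. U (min y t) (q y)) \<longlongrightarrow> U (min t t) (gen U x)) (at t within {0..})"
    using t by (intro tendsto_joint tendsto_intros) (auto simp: eventually_at_filter)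
  moreover have "eventually (\<lambda>y. U (min y t) (q y) = (1 / (y - t)) *\<^sub>R (U y x - U t x))
      (at t within {0..})"
    unfolding eventually_at_filter
  proof (intro always_eventually allI impI)
    fix y :: real assume "y \<noteq> t" and "y \<in> {0..}"
    then consider "t < y" | "y < t" "0 \<le> y"
      by fastforce
    then show "U (min y t) (q y) = (1 / (y - t)) *\<^sub>R (U y x - U t x)"
    proof cases
      case 1
      then have "U y x = U t (U (y - t) x)"
        using semigroup_law[OF t, of "y - t"] by simp
      then show ?thesis
        using 1 t by (simp add: q_def op_simps)
    next
      case 2
      then have "U t x = U y (U (t - y) x)"
        using semigroup_law[of y "t - y"] by simp
      moreover have "1 / (y - t) = - (1 / (t - y))"
        using 2 by (simp add: field_simps)
      ultimately show ?thesis
        using 2 by (simp add: q_def op_simps scaleR_diff_right)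
    qed
  qed
  ultimately show ?thesis
    unfolding has_vector_derivative_iff_difference_quotient by (simp add: tendsto_cong)
qed

lemma has_integral_orbit_generator:
  assumes "x \<in> gen_dom U" and "h \<ge> 0"
  shows "((\<lambda>s. U s (gen U x)) has_integral (U h x - x)) {0..h}"
  using fundamental_theorem_of_calculus_within[OF \<open>h \<ge> 0\<close>, of "\<lambda>s. U s x"] assms
    has_vector_derivative_within_subset[OF has_vector_derivative_orbit]
  by fastforce

lemma orbit_integral_shift:
  assumes h: "h \<ge> 0" and r: "r \<ge> 0"
  shows "U r (integral {0..h} (\<lambda>s. U s x)) =
    integral {0..r + h} (\<lambda>s. U s x) - integral {0..r} (\<lambda>s. U s x)"
proof -
  have "((\<lambda>s. U r (U s x)) has_integral U r (integral {0..h} (\<lambda>s. U s x))) {0..h}"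
    using has_integral_linear[OF integrable_integral[OF integrable_orbit] bounded_linear_op[OF r]]
    by (simp add: o_def)
  moreover have "U r (U s x) = ((\<lambda>s. U s x) \<circ> (+) r) s" if "s \<in> {0..h}" for s
    using that r by (simp add: semigroup_law)
  ultimately have "(((\<lambda>s. U s x) \<circ> (+) r) has_integral U r (integral {0..h} (\<lambda>s. U s x))) {0..h}"
    by (rule has_integral_eq[rotated])
  then have "((\<lambda>s. U s x) has_integral U r (integral {0..h} (\<lambda>s. U s x))) {r..r + h}"
    using has_integral_shift_cbox_iff[of "\<lambda>s. U s x" r _ 0 h] by (simp add: add.commute)
  from has_integral_combine_complete[OF _ _ integrable_integral[OF integrable_orbit] this] r h
  have "((\<lambda>s. U s x) has_integral integral {0..r} (\<lambda>s. U s x) + U r (integral {0..h} (\<lambda>s. U s x)))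
      {0..r + h}"
    by simp
  then show ?thesis
    by (simp add: integral_unique)
qed

lemma orbit_integral_right_derivative:
  assumes "h \<ge> 0"
  shows "((\<lambda>r. (1 / r) *\<^sub>R (integral {0..r + h} (\<lambda>s. U s x) - integral {0..h} (\<lambda>s. U s x)))
    \<longlongrightarrow> U h x) (at_right 0)"
proof -
  have "((\<lambda>u. integral {0..u} (\<lambda>s. U s x)) has_vector_derivative U h x) (at h within {0..h + 1})"
    using assms by (intro integral_has_vector_derivative_complete
        continuous_on_subset[OF continuous_orbit]) auto
  then have "((\<lambda>u. integral {0..u} (\<lambda>s. U s x)) has_vector_derivative U h x) (at_right h)"
    using has_vector_derivative_within_subset[of _ _ h "{0..h + 1}" "{h..h + 1}"] assms
    by (simp add: at_within_Icc_at_right)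
  then show ?thesis
    by (simp add: has_vector_derivative_iff_difference_quotient filterlim_at_right_to_0[of _ _ h])
qed

lemma generator_orbit_integral:
  assumes h: "h \<ge> 0"
  shows "integral {0..h} (\<lambda>s. U s x) \<in> gen_dom U"
    "gen U (integral {0..h} (\<lambda>s. U s x)) = U h x - x"
proof -
  let ?I = "\<lambda>u. integral {0..u} (\<lambda>s. U s x)"
  have "((\<lambda>r. (1 / r) *\<^sub>R (?I (r + h) - ?I h) - (1 / r) *\<^sub>R (?I (r + 0) - ?I 0))
      \<longlongrightarrow> U h x - U 0 x) (at_right 0)"
    by (intro tendsto_diff orbit_integral_right_derivative h order_refl)
  moreover have "eventually (\<lambda>r. (1 / r) *\<^sub>R (?I (r + h) - ?I h) - (1 / r) *\<^sub>R (?I (r + 0) - ?I 0) =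
      (1 / r) *\<^sub>R (U r (?I h) - ?I h)) (at_right 0)"
    using eventually_at_right_less[of 0]
    by eventually_elim (simp add: orbit_integral_shift h scaleR_diff_right)
  ultimately have "((\<lambda>r. (1 / r) *\<^sub>R (U r (?I h) - ?I h)) \<longlongrightarrow> U h x - x) (at_right 0)"
    by (simp add: tendsto_cong)
  then show "?I h \<in> gen_dom U" "gen U (?I h) = U h x - x"
    by (rule generatorI)+
qed

lemma closure_gen_dom: "closure (gen_dom U) = UNIV"
proof -
  have "x \<in> closure (gen_dom U)" for x
  proof (rule Lim_in_closed_set[OF closed_closure])
    show "((\<lambda>r. (1 / r) *\<^sub>R integral {0..r} (\<lambda>s. U s x)) \<longlongrightarrow> x) (at_right 0)"
      using orbit_integral_right_derivative[of 0 x] by simp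
    show "eventually (\<lambda>r. (1 / r) *\<^sub>R integral {0..r} (\<lambda>s. U s x) \<in> closure (gen_dom U)) (at_right 0)"
      using eventually_at_right_less[of 0]
    proof eventually_elim
      case (elim r)
      then have "scaleC (complex_of_real (1 / r)) (integral {0..r} (\<lambda>s. U s x)) \<in> gen_dom U"
        by (intro generator_scaleC generator_orbit_integral) simp
      then show ?case
        by (simp add: scaleR_scaleC closure_subset[THEN subsetD])
    qed
  qed simp
  then show ?thesis
    by auto
qed

lemma generator_closed:
  assumes xs: "\<And>n. xs n \<in> gen_dom U"
    and lim_x: "xs \<longlonglongrightarrow> x" and lim_y: "(\<lambda>n. gen U (xs n)) \<longlonglongrightarrow> y"
  shows "x \<in> gen_dom U" "gen U x = y"
proof -
  \<comment> \<open>Pass to the limit in \<open>U h x\<^sub>n - x\<^sub>n = \<integral>\<^sub>0\<^sup>h U s (L x\<^sub>n) ds\<close>.\<close>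
  have integral_eq: "integral {0..h} (\<lambda>s. U s y) = U h x - x" if h: "h \<ge> 0" for h
  proof -
    obtain M where M: "\<And>s v. s \<in> {0..h} \<Longrightarrow> norm (U s v) \<le> M * norm v"
      using norm_bound[of h] by blast
    show ?thesis
    proof (rule has_integral_uniform_limit_unique[OF h])
      show "((\<lambda>s. U s (gen U (xs n))) has_integral U h (xs n) - xs n) {0..h}" for n
        using xs h by (rule has_integral_orbit_generator)
      show "((\<lambda>s. U s y) has_integral integral {0..h} (\<lambda>s. U s y)) {0..h}"
        by (rule integrable_integral[OF integrable_orbit])
      show "norm (U s (gen U (xs n)) - U s y) \<le> M * norm (gen U (xs n) - y)" if "s \<in> {0..h}" for n s
        using M[OF that, of "gen U (xs n) - y"] that by (simp add: op_simps)
      show "(\<lambda>n. M * norm (gen U (xs n) - y)) \<longlonglongrightarrow> 0"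
        by (rule tendsto_mult_right_zero[OF tendsto_norm_zero[OF LIM_zero[OF lim_y]]])
      show "(\<lambda>n. U h (xs n) - xs n) \<longlonglongrightarrow> U h x - x"
        by (intro tendsto_diff bounded_linear.tendsto[OF bounded_linear_op[OF h]] lim_x)
    qed
  qed
  have ev: "eventually (\<lambda>r. (1 / r) *\<^sub>R integral {0..r} (\<lambda>s. U s y) = (1 / r) *\<^sub>R (U r x - x))
      (at_right 0)"
    using eventually_at_right_less[of 0] by eventually_elim (simp add: integral_eq)
  have "((\<lambda>r. (1 / r) *\<^sub>R integral {0..r} (\<lambda>s. U s y)) \<longlongrightarrow> y) (at_right 0)"
    using orbit_integral_right_derivative[of 0 y] by simp
  then have "((\<lambda>r. (1 / r) *\<^sub>R (U r x - x)) \<longlongrightarrow> y) (at_right 0)"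
    by (rule iffD1[OF tendsto_cong[OF ev]])
  then show "x \<in> gen_dom U" "gen U x = y"
    by (rule generatorI)+
qed

lemma closed_graph_generator: "closed (graph (gen_dom U) (gen U))"
  unfolding closed_sequential_limits
proof (intro allI impI, elim conjE)
  fix p :: "nat \<Rightarrow> 'a \<times> 'a" and l
  assume graph: "\<forall>n. p n \<in> graph (gen_dom U) (gen U)" and p: "p \<longlonglongrightarrow> l"
  define xs where "xs n = fst (p n)" for n
  have xs: "xs n \<in> gen_dom U" and p_eq: "p n = (xs n, gen U (xs n))" for n
    using graph[rule_format, of n] by (auto simp: graph_def xs_def)
  obtain x y where l: "l = (x, y)"
    by (cases l)
  have "xs \<longlonglongrightarrow> x" and "(\<lambda>n. gen U (xs n)) \<longlonglongrightarrow> y"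
    using tendsto_fst[OF p] tendsto_snd[OF p] by (simp_all add: p_eq l)
  from generator_closed[OF xs this] show "l \<in> graph (gen_dom U) (gen U)"
    by (simp add: l graph_def)
qed

lemma has_vector_derivative_evolution:
  assumes v: "(v has_vector_derivative v') (at s within {0..t})"
    and dom: "v s \<in> gen_dom U" and s: "s \<in> {0..t}"
  shows "((\<lambda>r. U (t - r) (v r)) has_vector_derivative U (t - s) v' - U (t - s) (gen U (v s)))
    (at s within {0..t})"
proof -
  have ts: "t - s \<ge> 0"
    using s by simp
  have inner: "((\<lambda>r. U (t - r) ((1 / (r - s)) *\<^sub>R (v r - v s))) \<longlongrightarrow> U (t - s) v')
      (at s within {0..t})"
    using v ts unfolding has_vector_derivative_iff_difference_quotient
    by (intro tendsto_joint tendsto_intros) (auto simp: eventually_at_filter)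
  have "((\<lambda>r. t - r) has_vector_derivative -1) (at s within {0..t})"
    by (auto intro!: derivative_eq_intros)
  moreover have "((\<lambda>u. U u (v s)) has_vector_derivative U (t - s) (gen U (v s)))
      (at (t - s) within (\<lambda>r. t - r) ` {0..t})"
    by (rule has_vector_derivative_within_subset[OF has_vector_derivative_orbit[OF dom ts]]) auto
  ultimately have "(((\<lambda>u. U u (v s)) \<circ> (\<lambda>r. t - r)) has_vector_derivative
      (-1) *\<^sub>R U (t - s) (gen U (v s))) (at s within {0..t})"
    by (rule vector_diff_chain_within)
  then have "((\<lambda>r. U (t - r) (v s)) has_vector_derivative - U (t - s) (gen U (v s)))
      (at s within {0..t})"
    by (simp add: o_def)
  then have outer: "((\<lambda>r. (1 / (r - s)) *\<^sub>R (U (t - r) (v s) - U (t - s) (v s)))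
      \<longlongrightarrow> - U (t - s) (gen U (v s))) (at s within {0..t})"
    by (simp add: has_vector_derivative_iff_difference_quotient)
  have "eventually (\<lambda>r. U (t - r) ((1 / (r - s)) *\<^sub>R (v r - v s)) +
      (1 / (r - s)) *\<^sub>R (U (t - r) (v s) - U (t - s) (v s)) =
      (1 / (r - s)) *\<^sub>R (U (t - r) (v r) - U (t - s) (v s))) (at s within {0..t})"
    unfolding eventually_at_filter
    by (intro always_eventually) (auto simp: op_simps scaleR_diff_right)
  then show ?thesis
    using tendsto_add[OF inner outer]
    by (simp add: has_vector_derivative_iff_difference_quotient tendsto_cong)
qed

lemma continuous_on_evolution:
  assumes "continuous_on {0..t} f"
  shows "continuous_on {0..t} (\<lambda>s. U (t - s) (f s))"
  unfolding continuous_on_def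
proof
  fix s assume "s \<in> {0..t}"
  then show "((\<lambda>s. U (t - s) (f s)) \<longlongrightarrow> U (t - s) (f s)) (at s within {0..t})"
    using assms by (intro tendsto_joint tendsto_intros)
      (auto simp: continuous_on_def eventually_at_filter)
qed

lemma invariant_functional:
  assumes phi: "bounded_linear \<phi>" and null: "\<And>x. x \<in> gen_dom U \<Longrightarrow> \<phi> (gen U x) = 0"
    and t: "t \<ge> 0"
  shows "\<phi> (U t x) = \<phi> x"
proof -
  have "continuous_on (closure (gen_dom U)) (\<lambda>x. \<phi> (U t x) - \<phi> x)"
    using t by (intro continuous_intros linear_continuous_on bounded_linear_compose[OF phi]
        bounded_linear_op phi)
  moreover have "\<phi> (U t x) - \<phi> x = 0" if x: "x \<in> gen_dom U" for x
  proof -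
    have "((\<lambda>r. \<phi> (U r x)) has_vector_derivative 0) (at r within {0..t})" if "r \<in> {0..t}" for r
      using bounded_linear.has_vector_derivative[OF phi
          has_vector_derivative_within_subset[OF has_vector_derivative_orbit[OF x]]] that
      by (auto simp: generator_orbit(2)[OF x, symmetric] null generator_orbit(1)[OF x])
    then obtain c where "\<And>r. r \<in> {0..t} \<Longrightarrow> \<phi> (U r x) = c"
      using has_vector_derivative_zero_constant[OF convex_real_interval(5), where f="\<lambda>r. \<phi> (U r x)"]
      by blast
    then show ?thesis
      using t by (metis at_zero atLeastAtMost_iff order_refl right_minus_eq)
  qed
  ultimately show ?thesis
    using continuous_constant_on_closure[of "gen_dom U" "\<lambda>x. \<phi> (U t x) - \<phi> x" 0 x]
    by (simp add: closure_gen_dom)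
qed

end

section \<open>Duhamel's formula\<close>

lemma duhamel_formula_on_domain:
  assumes U: "strongly_continuous_semigroup U" and G: "strongly_continuous_semigroup G"
    and dom: "gen_dom G = gen_dom U" and gen: "\<And>x. x \<in> gen_dom U \<Longrightarrow> gen G x = gen U x - B x"
    and x: "x \<in> gen_dom U" and t: "t \<ge> 0"
  shows "((\<lambda>s. U (t - s) (B (G s x))) has_integral (U t x - G t x)) {0..t}"
proof -
  interpret U: strongly_continuous_semigroup U by (fact U)
  interpret G: strongly_continuous_semigroup G by (fact G)
  have "((\<lambda>s. U (t - s) (G s x)) has_vector_derivative - U (t - s) (B (G s x))) (at s within {0..t})"
    if s: "s \<in> {0..t}" for s
  proof -
    have Gx: "G s x \<in> gen_dom U"
      using G.generator_orbit(1)[of x s] x dom s by simp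
    have "((\<lambda>r. G r x) has_vector_derivative G s (gen G x)) (at s within {0..t})"
      using has_vector_derivative_within_subset[OF G.has_vector_derivative_orbit] x dom s by auto
    from U.has_vector_derivative_evolution[OF this Gx s]
    have "((\<lambda>r. U (t - r) (G r x)) has_vector_derivative
        U (t - s) (G s (gen G x)) - U (t - s) (gen U (G s x))) (at s within {0..t})" .
    moreover have "G s (gen G x) = gen U (G s x) - B (G s x)"
      using G.generator_orbit(2)[of x s] gen[OF Gx] x dom s by simp
    ultimately show ?thesis
      using s by (simp add: U.op_simps)
  qed
  from fundamental_theorem_of_calculus_within[OF t this]
  have "((\<lambda>s. - U (t - s) (B (G s x))) has_integral (G t x - U t x)) {0..t}"
    by simp
  from has_integral_neg[OF this] show ?thesis
    by simp
qed

lemma duhamel_formula: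
  assumes U: "strongly_continuous_semigroup U" and G: "strongly_continuous_semigroup G"
    and dom: "gen_dom G = gen_dom U" and B: "bounded_linear B"
    and gen: "\<And>x. x \<in> gen_dom U \<Longrightarrow> gen G x = gen U x - B x" and t: "t \<ge> 0"
  shows "((\<lambda>s. U (t - s) (B (G s x))) has_integral (U t x - G t x)) {0..t}"
proof -
  interpret U: strongly_continuous_semigroup U by (fact U)
  interpret G: strongly_continuous_semigroup G by (fact G)
  let ?f = "\<lambda>x s. U (t - s) (B (G s x))"
  obtain ys where ys: "\<And>n. ys n \<in> gen_dom U" and lim: "ys \<longlonglongrightarrow> x"
    using U.closure_gen_dom closure_sequential by (metis UNIV_I)
  obtain MU where MU: "MU \<ge> 0" "\<And>s v. s \<in> {0..t} \<Longrightarrow> norm (U s v) \<le> MU * norm v"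
    using U.norm_bound[of t] by blast
  obtain MG where MG: "MG \<ge> 0" "\<And>s v. s \<in> {0..t} \<Longrightarrow> norm (G s v) \<le> MG * norm v"
    using G.norm_bound[of t] by blast
  obtain KB where KB: "\<And>v. norm (B v) \<le> norm v * KB" "KB > 0"
    using bounded_linear.pos_bounded[OF B] by blast
  have "continuous_on {0..t} (\<lambda>s. B (G s x))"
    by (intro bounded_linear.continuous_on[OF B] continuous_on_subset[OF G.continuous_orbit]) auto
  then have "continuous_on {0..t} (?f x)"
    by (rule U.continuous_on_evolution)
  then have integrable: "(?f x has_integral integral {0..t} (?f x)) {0..t}"
    by (intro integrable_integral integrable_continuous_interval_complete)
  have "integral {0..t} (?f x) = U t x - G t x"
  proof (rule has_integral_uniform_limit_unique[OF t _ integrable])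
    show "(?f (ys n) has_integral U t (ys n) - G t (ys n)) {0..t}" for n
      using duhamel_formula_on_domain[OF U G dom gen ys t] .
    show "norm (?f (ys n) s - ?f x s) \<le> MU * (MG * norm (ys n - x) * KB)" if s: "s \<in> {0..t}" for n s
    proof -
      have "norm (?f (ys n) s - ?f x s) = norm (U (t - s) (B (G s (ys n - x))))"
        using s by (simp add: U.op_simps G.op_simps linear_simps[OF B])
      also have "\<dots> \<le> MU * norm (B (G s (ys n - x)))"
        using MU(2)[of "t - s"] s by simp
      also have "\<dots> \<le> MU * (norm (G s (ys n - x)) * KB)"
        by (intro mult_left_mono KB(1) MU(1))
      also have "\<dots> \<le> MU * (MG * norm (ys n - x) * KB)"
        using MG s MU(1) KB(2) by (intro mult_left_mono mult_right_mono) auto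
      finally show ?thesis .
    qed
    show "(\<lambda>n. MU * (MG * norm (ys n - x) * KB)) \<longlonglongrightarrow> 0"
      by (rule tendsto_mult_right_zero, rule tendsto_mult_left_zero, rule tendsto_mult_right_zero)
        (rule tendsto_norm_zero[OF LIM_zero[OF lim]])
    show "(\<lambda>n. U t (ys n) - G t (ys n)) \<longlonglongrightarrow> U t x - G t x"
      by (intro tendsto_diff bounded_linear.tendsto[OF U.bounded_linear_op[OF t]]
          bounded_linear.tendsto[OF G.bounded_linear_op[OF t]] lim)
  qed
  then show ?thesis
    using integrable by simp
qed

section \<open>Adjoints, closures and the projection \<open>Q\<close>\<close>

lemma cinner_adj:
  assumes dense: "closure D = UNIV" and y: "y \<in> adj_dom D A" and x: "x \<in> D"
  shows "cinner (A x) y = cinner x (adj D A y)"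
proof -
  obtain w where w: "\<forall>x\<in>D. cinner (A x) y = cinner x w"
    using y by (auto simp: adj_dom_def)
  have "w' = w" if w': "\<forall>x\<in>D. cinner (A x) y = cinner x w'" for w'
  proof -
    have "continuous_on (closure D) (\<lambda>x. cinner x (w' - w))"
      by (intro linear_continuous_on bounded_bilinear.bounded_linear_left[OF bounded_bilinear_cinner])
    moreover have "cinner x (w' - w) = 0" if "x \<in> D" for x
      using w w' that by (simp add: cinner_diff_right)
    ultimately have "cinner (w' - w) (w' - w) = 0"
      using continuous_constant_on_closure[of D "\<lambda>x. cinner x (w' - w)" 0 "w' - w"] dense by simp
    then show ?thesis
      by (simp add: cinner_self_eq_zero)
  qed
  then have "adj D A y = w"
    unfolding adj_def using w by (intro the_equality) auto
  then show ?thesis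
    using w x by simp
qed

lemma
  assumes "closed (graph D A)"
  shows clos_dom_closed_graph: "clos_dom D A = D"
    and clos_closed_graph: "x \<in> D \<Longrightarrow> clos D A x = A x"
  using assms by (auto simp: clos_dom_def clos_def graph_def)

lemma closed_graph_diff_bounded_linear:
  assumes A: "closed (graph D A)" and B: "bounded_linear B"
  shows "closed (graph D (\<lambda>x. A x - B x))"
proof -
  have "graph D (\<lambda>x. A x - B x) = (\<lambda>p. (fst p, snd p + B (fst p))) -` graph D A"
    by (auto simp: graph_def eq_diff_eq)
  moreover have "closed ((\<lambda>p. (fst p, snd p + B (fst p))) -` graph D A)"
    by (intro continuous_closed_vimage[OF A] continuous_intros linear_continuous_at[OF B]
        continuous_at_compose[of _ fst B, unfolded o_def])
  ultimately show ?thesis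
    by simp
qed

lemma bounded_linear_scaleC_cinner: "bounded_linear (\<lambda>x. scaleC (cinner x w / c) v)"
  using bounded_linear_compose[OF bounded_bilinear.bounded_linear_left[OF bounded_bilinear_scaleC]
      bounded_linear_compose[OF bounded_linear_divide
        bounded_bilinear.bounded_linear_left[OF bounded_bilinear_cinner]]] .

lemma projQ_diff: "projQ z (x - y) = projQ z x - projQ z y"
  by (simp add: projQ_def projP_def cinner_diff_left diff_divide_distrib scaleC_diff_left algebra_simps)

lemma projQ_scaleC: "projQ z (scaleC c x) = scaleC c (projQ z x)"
  by (simp add: projQ_def projP_def cinner_scaleC_left scaleC_diff_right scaleC_scaleC)

lemma cinner_projQ_left: "z \<noteq> 0 \<Longrightarrow> cinner (projQ z x) z = 0"
  by (simp add: projQ_def projP_def cinner_diff_left cinner_scaleC_left cinner_self_eq_zero)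

lemma cinner_projQ_right: "cinner v z = 0 \<Longrightarrow> cinner v (projQ z w) = cinner v w"
  by (simp add: projQ_def projP_def cinner_diff_right cinner_scaleC_right)

section \<open>The orthogonal dynamics\<close>

locale orthogonal_dynamics =
  U: strongly_continuous_semigroup U + G: strongly_continuous_semigroup G
  for U G :: "real \<Rightarrow> 'a::{complex_inner, complete_space} \<Rightarrow> 'a" +
  fixes z :: 'a
  assumes z_dom: "z \<in> gen_dom U"
    and z_adj: "z \<in> adj_dom (gen_dom U) (gen U)"
    and z_nonzero: "z \<noteq> 0"
    and G_dom: "gen_dom G = {x. projQ z x \<in> clos_dom (gen_dom U) (\<lambda>x. projQ z (gen U x))}"
    and G_gen: "\<forall>x\<in>gen_dom G. gen G x = clos (gen_dom U) (\<lambda>x. projQ z (gen U x)) (projQ z x)"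
begin

abbreviation adj_z :: 'a where
  "adj_z \<equiv> adj (gen_dom U) (gen U) z"

lemma projQ_generator:
  assumes "x \<in> gen_dom U"
  shows "projQ z (gen U x) = gen U x - scaleC (cinner x adj_z / cinner z z) z"
  using cinner_adj[OF U.closure_gen_dom z_adj assms] by (simp add: projQ_def projP_def)

lemma closed_graph_projQ_generator: "closed (graph (gen_dom U) (\<lambda>x. projQ z (gen U x)))"
proof -
  have "graph (gen_dom U) (\<lambda>x. projQ z (gen U x)) =
      graph (gen_dom U) (\<lambda>x. gen U x - scaleC (cinner x adj_z / cinner z z) z)"
    by (auto simp: graph_def projQ_generator)
  then show ?thesis
    using closed_graph_diff_bounded_linear[OF U.closed_graph_generator bounded_linear_scaleC_cinner]
    by simp
qed

lemma projQ_mem_gen_dom_iff: "projQ z x \<in> gen_dom U \<longleftrightarrow> x \<in> gen_dom U"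
proof -
  have Qx: "projQ z x = x - scaleC (cinner x z / cinner z z) z"
    by (simp add: projQ_def projP_def)
  have z': "scaleC (cinner x z / cinner z z) z \<in> gen_dom U"
    by (rule U.generator_scaleC(1)[OF z_dom])
  show ?thesis
  proof
    assume "projQ z x \<in> gen_dom U"
    from U.generator_add(1)[OF this z'] show "x \<in> gen_dom U"
      by (simp add: Qx)
  next
    assume "x \<in> gen_dom U"
    from U.generator_diff(1)[OF this z'] show "projQ z x \<in> gen_dom U"
      by (simp add: Qx)
  qed
qed

lemma gen_dom_G: "gen_dom G = gen_dom U"
  using G_dom by (simp add: clos_dom_closed_graph[OF closed_graph_projQ_generator] projQ_mem_gen_dom_iff)

lemma generator_G: "x \<in> gen_dom U \<Longrightarrow> gen G x = projQ z (gen U (projQ z x))"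
  using G_gen gen_dom_G clos_closed_graph[OF closed_graph_projQ_generator] projQ_mem_gen_dom_iff
  by simp

text \<open>The bounded operator \<open>B\<close> is the continuous extension of \<open>P L + Q L P\<close>, the difference
  between \<open>L\<close> and the orthogonal generator \<open>Q L Q\<close>.\<close>

definition B :: "'a \<Rightarrow> 'a" where
  "B x = scaleC (cinner x adj_z / cinner z z) z + scaleC (cinner x z / cinner z z) (projQ z (gen U z))"

lemma bounded_linear_B: "bounded_linear B"
  unfolding B_def by (intro bounded_linear_add bounded_linear_scaleC_cinner)

lemma generator_G_eq:
  assumes x: "x \<in> gen_dom U"
  shows "gen G x = gen U x - B x"
proof -
  define a where "a = cinner x z / cinner z z"
  have Qx: "projQ z x = x - scaleC a z"
    by (simp add: projQ_def projP_def a_def)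
  have "gen U (projQ z x) = gen U x - scaleC a (gen U z)"
    unfolding Qx using U.generator_diff(2)[OF x U.generator_scaleC(1)[OF z_dom]]
      U.generator_scaleC(2)[OF z_dom] by simp
  then have "gen G x = projQ z (gen U x) - scaleC a (projQ z (gen U z))"
    using generator_G[OF x] by (simp add: projQ_diff projQ_scaleC)
  then show ?thesis
    by (simp add: projQ_generator[OF x] B_def a_def)
qed

lemma cinner_G_z: "t \<ge> 0 \<Longrightarrow> cinner (G t x) z = cinner x z"
  by (intro G.invariant_functional bounded_bilinear.bounded_linear_left[OF bounded_bilinear_cinner])
    (simp add: gen_dom_G generator_G cinner_projQ_left z_nonzero)

lemma memory_term:
  assumes t: "t \<ge> 0"
  defines "q \<equiv> projQ z (gen U z)"
  shows "U t q - G t q =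
    integral {0..t} (\<lambda>s. scaleC (cinner (G (t - s) q) (projQ z adj_z) / cinner z z) (U s z))"
proof -
  have B_expansion:
    "U (t - s) (B (G s q)) = scaleC (cinner (G s q) (projQ z adj_z) / cinner z z) (U (t - s) z)"
    if s: "s \<in> {0..t}" for s
  proof -
    have "cinner (G s q) z = 0"
      using cinner_G_z[of s q] s cinner_projQ_left[OF z_nonzero] by (simp add: q_def)
    then show ?thesis
      using s by (simp add: B_def cinner_projQ_right U.op_simps U.scaleC_commute)
  qed
  define F where "F = (\<lambda>s. scaleC (cinner (G (t - s) q) (projQ z adj_z) / cinner z z) (U s z))"
  have "((\<lambda>s. F (t - s)) has_integral U t q - G t q) {0..t}"
    by (rule has_integral_eq[OF _ duhamel_formula[OF U.strongly_continuous_semigroup_axioms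
          G.strongly_continuous_semigroup_axioms gen_dom_G bounded_linear_B generator_G_eq t]])
      (simp add: F_def B_expansion)
  then have "(F has_integral U t q - G t q) {0..t}"
    by (simp only: has_integral_reflect_interval)
  then show ?thesis
    unfolding F_def by (simp add: integral_unique)
qed

end

theorem theorem1:
  fixes U G :: "real \<Rightarrow> 'a::{complex_inner, complete_space} \<Rightarrow> 'a"
    and z :: 'a
  assumes U_sg: "c0_semigroup U"
    and z_dom: "z \<in> gen_dom U"
    and z_adj: "z \<in> adj_dom (gen_dom U) (gen U)"
    and z_nz: "z \<noteq> 0"
    and G_sg: "c0_semigroup G"
    and G_dom: "gen_dom G =
        {x. projQ z x \<in> clos_dom (gen_dom U) (\<lambda>x. projQ z (gen U x))}"
    and G_gen: "\<forall>x\<in>gen_dom G.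
        gen G x = clos (gen_dom U) (\<lambda>x. projQ z (gen U x)) (projQ z x)"
  shows "\<forall>t\<ge>0. U t z \<in> gen_dom U \<and>
     ((\<lambda>s. U s z) has_vector_derivative
        (U t (projP z (gen U z))
         + G t (projQ z (gen U z))
         + integral {0..t} (\<lambda>s.
             scaleC (cinner (G (t - s) (projQ z (gen U z)))
                            (projQ z (adj (gen_dom U) (gen U) z)) / cinner z z)
                    (U s z))))
      (at t within {0..})"
proof (intro allI impI conjI)
  interpret orthogonal_dynamics U G z
    by unfold_locales (use assms in simp_all)
  fix t :: real
  assume t: "t \<ge> 0"
  show "U t z \<in> gen_dom U"
    using U.generator_orbit(1)[OF z_dom t] .
  have "U t (gen U z) = U t (projP z (gen U z)) + U t (projQ z (gen U z))"
    using t by (simp add: projQ_def U.op_simps)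
  then show "((\<lambda>s. U s z) has_vector_derivative
        (U t (projP z (gen U z)) + G t (projQ z (gen U z)) + integral {0..t} (\<lambda>s.
           scaleC (cinner (G (t - s) (projQ z (gen U z))) (projQ z (adj (gen_dom U) (gen U) z))
             / cinner z z) (U s z))))
      (at t within {0..})"
    using U.has_vector_derivative_orbit[OF z_dom t] memory_term[OF t] by (simp add: algebra_simps)
qed

end
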